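(* Let $\mathcal G$ be a Lie superalgebra over a field of characteristic zero with bracket $[\cdot,\cdot]$, and let $\mathcal U_{1-}=\bigoplus_{p\ge0}\mathcal U_{1-p}$ be the space of operators on $\mathcal U_1=\mathcal G$ described below, equipped with the extended bracket $[\cdot,\cdot]$ described below. Then $(\mathcal U_{1-},[\cdot,\cdot])$ is a Lie superalgebra.
   Context: Set $\mathcal U_1=\mathcal G=\mathcal G^{(0)}\oplus\mathcal G^{(1)}$ (its $\mathbb Z_2$-grading). For $p\ge1$ define recursively $\mathcal U_{-p+1}=\mathrm{Hom}(\mathcal U_1,\mathcal U_{-p+2})$ (all linear maps), $\mathbb Z_2$-graded by declaring $A$ even (resp. odd) if it maps $\mathcal U_1^{(i)}$ into $\mathcal U_{-p+2}^{(i)}$ (resp. $\mathcal U_{-p+2}^{(i+1)}$). $|u|$ denotes the parity of a homogeneous element; sign formulas are for homogeneous elements and are extended bilinearly. Elements of $\mathcal U_{1-p}$ are operators of order $p$ (elements of $\mathcal G$ have order $0$). Define $\circ$: for an operator $A$ of order $p\ge1$ and $y\in\mathcal U_1$, $A\circ y=A(y)$ and $y\circ A=0$; for operators $A,B$ of orders $\ge1$, recursively $(A\circ B)(x)=A\circ B(x)+(-1)^{|B||x|}A(x)\circ B$ for $x\in\mathcal U_1$. Define $\bullet$ on $\mathcal U_{1-}$: for $A_p,B_q$ of orders $p,q\ge1$, $A_p\bullet B_q=\frac{p!\,q!}{(p+q-1)!}A_p\circ B_q$; $A_p\bullet x=pA_p(x)$ and $x\bullet A_p=0$ for $x\in\mathcal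 U_1$; and $x\bullet y=0$ for $x,y\in\mathcal U_1$. The bracket of $\mathcal G$ is extended to $\mathcal U_{1-}$ as follows: on order-$0$ elements it is the bracket of $\mathcal G$; for operators $A,B$ of orders $p,q$ with $p+q\ge1$, $[A,B]$ is the operator of order $p+q$ (of parity $|A|+|B|$) defined recursively by $[A,B]\bullet x=[A,B\bullet x]+(-1)^{|x||B|}[A\bullet x,B]$ for all $x\in\mathcal G$. *)

theory Defs
  imports Complex_Main "HOL-Library.Function_Algebras"
begin

text \<open>Parities are booleans: False = even, True = odd. The sign (-1)^(|a||b|)
  is realised by sgnb.\<close>

definition sgnb :: "bool \<Rightarrow> 'v::ab_group_add \<Rightarrow> 'v" where
  "sgnb b v = (if b then - v else v)"

definition gpart :: "'v set \<Rightarrow> 'v set \<Rightarrow> bool \<Rightarrow> 'v set" where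
  "gpart V0 V1 b = (if b then V1 else V0)"

definition lie_superalgebra ::
  "('k::field \<Rightarrow> 'v::ab_group_add \<Rightarrow> 'v) \<Rightarrow> 'v set \<Rightarrow> 'v set \<Rightarrow> 'v set
     \<Rightarrow> ('v \<Rightarrow> 'v \<Rightarrow> 'v) \<Rightarrow> bool" where
  "lie_superalgebra scale V V0 V1 br \<longleftrightarrow>
     vector_space scale \<and>
     Modules.module.subspace scale V0 \<and> Modules.module.subspace scale V1 \<and>
     V0 \<inter> V1 = {0} \<and> V = {a + b | a b. a \<in> V0 \<and> b \<in> V1} \<and>
     (\<forall>a\<in>V. \<forall>b\<in>V. br a b \<in> V) \<and>
     (\<forall>a\<in>V. \<forall>b\<in>V. \<forall>c\<in>V. br (a + b) c = br a c + br b c \<and>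
                          br c (a + b) = br c a + br c b) \<and>
     (\<forall>k. \<forall>a\<in>V. \<forall>b\<in>V. br (scale k a) b = scale k (br a b) \<and>
                        br a (scale k b) = scale k (br a b)) \<and>
     (\<forall>i j a b. a \<in> gpart V0 V1 i \<longrightarrow> b \<in> gpart V0 V1 j \<longrightarrow>
                 br a b \<in> gpart V0 V1 (i \<noteq> j)) \<and>
     (\<forall>i j a b. a \<in> gpart V0 V1 i \<longrightarrow> b \<in> gpart V0 V1 j \<longrightarrow>
                 br a b = - sgnb (i \<and> j) (br b a)) \<and>
     (\<forall>i j k a b c. a \<in> gpart V0 V1 i \<longrightarrow> b \<in> gpart V0 V1 j \<longrightarrow> c \<in> gpart V0 V1 k \<longrightarrow>
                 br a (br b c) = br (br a b) c + sgnb (i \<and> j) (br b (br a c)))"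

text \<open>An operator of order p (element of U_{1-p}, an iterated Hom) is represented
  as the associated p-multilinear map G^p \<rightarrow> G, i.e. its values on lists of length p:
  A(x1)(x2)...(xp) = A [x1,...,xp].  An element of the direct sum U_{1-} is a function
  u on all lists whose restriction to lists of length p is the order-p component;
  only finitely many components are nonzero.\<close>

definition Uspace :: "('k::field \<Rightarrow> 'g::ab_group_add \<Rightarrow> 'g) \<Rightarrow> ('g list \<Rightarrow> 'g) set" where
  "Uspace scale = {u.
     (\<forall>xs ys a b. u (xs @ (a + b) # ys) = u (xs @ a # ys) + u (xs @ b # ys)) \<and>
     (\<forall>xs ys c a. u (xs @ scale c a # ys) = scale c (u (xs @ a # ys))) \<and>
     finite {length xs | xs. u xs \<noteq> 0}}"

definition uscale :: "('k \<Rightarrow> 'g \<Rightarrow> 'g) \<Rightarrow> 'k \<Rightarrow> ('g list \<Rightarrow> 'g) \<Rightarrow> ('g list \<Rightarrow> 'g)" where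
  "uscale scale c u = (\<lambda>xs. scale c (u xs))"

definition parsum :: "bool list \<Rightarrow> bool" where
  "parsum es = foldr (\<lambda>a b. a \<noteq> b) es False"

text \<open>Parity-b part of U_{1-}: A is of parity b iff A(x1..xp) has parity b + |x1|+...+|xp|
  for homogeneous x1..xp (the recursive definition of the grading, unfolded).\<close>

definition Upart :: "('k::field \<Rightarrow> 'g::ab_group_add \<Rightarrow> 'g) \<Rightarrow> 'g set \<Rightarrow> 'g set \<Rightarrow> bool
     \<Rightarrow> ('g list \<Rightarrow> 'g) set" where
  "Upart scale G0 G1 b = {u \<in> Uspace scale.
     \<forall>xs es. length es = length xs \<and> (\<forall>i<length xs. xs ! i \<in> gpart G0 G1 (es ! i))
        \<longrightarrow> u xs \<in> gpart G0 G1 (b \<noteq> parsum es)}"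

definition gproj :: "'g::ab_group_add set \<Rightarrow> 'g set \<Rightarrow> bool \<Rightarrow> 'g \<Rightarrow> 'g" where
  "gproj G0 G1 b x = (THE y. y \<in> gpart G0 G1 b \<and> x - y \<in> gpart G0 G1 (\<not> b))"

fun opproj :: "'g::ab_group_add set \<Rightarrow> 'g set \<Rightarrow> bool \<Rightarrow> ('g list \<Rightarrow> 'g) \<Rightarrow> 'g list \<Rightarrow> 'g" where
  "opproj G0 G1 b A [] = gproj G0 G1 b (A [])"
| "opproj G0 G1 b A (x # xs) =
     opproj G0 G1 b (\<lambda>zs. A (gproj G0 G1 False x # zs)) xs
   + opproj G0 G1 (\<not> b) (\<lambda>zs. A (gproj G0 G1 True x # zs)) xs"

text \<open>Extended bracket [A,B] of an order-p operator A and an order-q operator B,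
  as an order-(p+q) operator, by the recursion
  [A,B]\<bullet>x = [A, B\<bullet>x] + (-1)^(|x||B|) [A\<bullet>x, B], where [A,B]\<bullet>x = (p+q)[A,B](x),
  A\<bullet>x = p A(x) for p \<ge> 1 and y\<bullet>x = 0 for y \<in> G; extended bilinearly
  (x and B are split into homogeneous parts).\<close>

fun brop :: "('k::field_char_0 \<Rightarrow> 'g::ab_group_add \<Rightarrow> 'g) \<Rightarrow> 'g set \<Rightarrow> 'g set \<Rightarrow> ('g \<Rightarrow> 'g \<Rightarrow> 'g)
     \<Rightarrow> nat \<Rightarrow> nat \<Rightarrow> ('g list \<Rightarrow> 'g) \<Rightarrow> ('g list \<Rightarrow> 'g) \<Rightarrow> 'g list \<Rightarrow> 'g" where
  "brop scale G0 G1 br p q A B [] = br (A []) (B [])"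
| "brop scale G0 G1 br p q A B (x # ys) =
     scale (1 / of_nat (p + q))
      ((if q = 0 then 0
        else scale (of_nat q) (brop scale G0 G1 br p (q - 1) A (\<lambda>zs. B (x # zs)) ys))
     + (if p = 0 then 0
        else scale (of_nat p)
          (\<Sum>i\<in>(UNIV::bool set). \<Sum>j\<in>(UNIV::bool set).
             sgnb (i \<and> j) (brop scale G0 G1 br (p - 1) q
                (\<lambda>zs. A (gproj G0 G1 i x # zs)) (opproj G0 G1 j B) ys))))"

definition ubracket :: "('k::field_char_0 \<Rightarrow> 'g::ab_group_add \<Rightarrow> 'g) \<Rightarrow> 'g set \<Rightarrow> 'g set
     \<Rightarrow> ('g \<Rightarrow> 'g \<Rightarrow> 'g) \<Rightarrow> ('g list \<Rightarrow> 'g) \<Rightarrow> ('g list \<Rightarrow> 'g) \<Rightarrow> ('g list \<Rightarrow> 'g)" where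
  "ubracket scale G0 G1 br u v =
     (\<lambda>xs. \<Sum>p\<in>{0..length xs}. brop scale G0 G1 br p (length xs - p) u v xs)"

end

theory Submission
  imports Defs
begin

text \<open>An operator u of order p is encoded by its p-multilinear map, and contracting it with a
  vector x gives the operator u \<bullet> x of order p - 1 with (u \<bullet> x)(zs) = p u(x # zs). The recursion
  defining the extended bracket says precisely that contraction with a homogeneous x is a super
  derivation of it: [u, v] \<bullet> x = [u, v \<bullet> x] + (-1)^(|x||v|) [u \<bullet> x, v]. An element of U_{1-}
  is determined by its constant term and its contractions with homogeneous vectors, so closure,
  grading, super antisymmetry and the super Jacobi identity all follow by induction on the number
  of arguments: the constant terms satisfy the corresponding identities in G, and the contracted
  identities are the induction hypothesis for contracted operators, up to the signs produced by
  the derivation rule.\<close>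

lemma sgnb_False [simp]: "sgnb False v = v"
  and sgnb_True [simp]: "sgnb True v = - v"
  by (simp_all add: sgnb_def)

lemma sgnb_add: "sgnb b (x + y) = sgnb b x + sgnb b y"
  by (simp add: sgnb_def)

lemma sgnb_apply [simp]: "sgnb b f x = sgnb b (f x)"
  by (simp add: sgnb_def)

lemma sum_UNIV_bool: "(\<Sum>i\<in>UNIV. f i) = f False + f True"
  by (simp add: UNIV_bool add.commute)

lemma parsum_Nil [simp]: "parsum [] = False"
  and parsum_Cons [simp]: "parsum (e # es) = (e \<noteq> parsum es)"
  by (simp_all add: parsum_def)

lemma Upart_iff:
  "u \<in> Upart scale G0 G1 b \<longleftrightarrow> u \<in> Uspace scale \<and>
     (\<forall>xs es. list_all2 (\<lambda>x e. x \<in> gpart G0 G1 e) xs es \<longrightarrow> u xs \<in> gpart G0 G1 (b \<noteq> parsum es))"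
proof -
  have "list_all2 (\<lambda>x e. x \<in> gpart G0 G1 e) xs es \<longleftrightarrow>
      length es = length xs \<and> (\<forall>i<length xs. xs ! i \<in> gpart G0 G1 (es ! i))" for xs es
    by (auto simp: list_all2_conv_all_nth)
  then show ?thesis
    by (simp add: Upart_def)
qed

lemma uscale_apply [simp]: "uscale scale c u xs = scale c (u xs)"
  by (simp add: uscale_def)

definition opdot :: "('k::semiring_1 \<Rightarrow> 'g \<Rightarrow> 'g) \<Rightarrow> ('g list \<Rightarrow> 'g) \<Rightarrow> 'g \<Rightarrow> 'g list \<Rightarrow> 'g" where
  "opdot scale u x = (\<lambda>zs. scale (of_nat (Suc (length zs))) (u (x # zs)))"

context vector_space
begin

lemma UspaceI:
  assumes "\<And>xs ys a b. u (xs @ (a + b) # ys) = u (xs @ a # ys) + u (xs @ b # ys)"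
    and "\<And>xs ys c a. u (xs @ scale c a # ys) = scale c (u (xs @ a # ys))"
    and "\<And>xs. M < length xs \<Longrightarrow> u xs = 0"
  shows "u \<in> Uspace scale"
proof -
  have "{length xs | xs. u xs \<noteq> 0} \<subseteq> {..M}"
    using assms(3) by force
  then have "finite {length xs | xs. u xs \<noteq> 0}"
    by (rule finite_subset) simp
  then show ?thesis
    using assms(1,2) by (simp add: Uspace_def)
qed

lemma Uspace_add: "u \<in> Uspace scale \<Longrightarrow> u (xs @ (a + b) # ys) = u (xs @ a # ys) + u (xs @ b # ys)"
  and Uspace_scale: "u \<in> Uspace scale \<Longrightarrow> u (xs @ scale c a # ys) = scale c (u (xs @ a # ys))"
  by (simp_all add: Uspace_def)

lemma Uspace_add_Cons: "u \<in> Uspace scale \<Longrightarrow> u ((a + b) # ys) = u (a # ys) + u (b # ys)"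
  using Uspace_add[of u "[]"] by simp

lemma Uspace_scale_Cons: "u \<in> Uspace scale \<Longrightarrow> u (scale c a # ys) = scale c (u (a # ys))"
  using Uspace_scale[of u "[]"] by simp

lemma Uspace_zero_Cons: "u \<in> Uspace scale \<Longrightarrow> u (0 # ys) = 0"
  using Uspace_add_Cons[of u 0 0 ys] by simp

lemma Uspace_vanishes: "u \<in> Uspace scale \<Longrightarrow> \<exists>M. \<forall>xs. M < length xs \<longrightarrow> u xs = 0"
proof -
  assume "u \<in> Uspace scale"
  then have "finite {length xs | xs. u xs \<noteq> 0}"
    by (simp add: Uspace_def)
  then obtain M where "\<forall>n\<in>{length xs | xs. u xs \<noteq> 0}. n \<le> M"
    using finite_nat_set_iff_bounded_le by blast
  then show ?thesis
    by (intro exI[of _ M]) force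
qed

lemma zero_Uspace [simp]: "0 \<in> Uspace scale"
  by (rule UspaceI[where M = 0]) simp_all

lemma add_Uspace:
  assumes u: "u \<in> Uspace scale" and v: "v \<in> Uspace scale"
  shows "u + v \<in> Uspace scale"
proof -
  obtain M1 where "\<forall>xs. M1 < length xs \<longrightarrow> u xs = 0"
    using Uspace_vanishes[OF u] by blast
  moreover obtain M2 where "\<forall>xs. M2 < length xs \<longrightarrow> v xs = 0"
    using Uspace_vanishes[OF v] by blast
  ultimately show ?thesis
    by (intro UspaceI[where M = "M1 + M2"])
       (simp_all add: Uspace_add[OF u] Uspace_add[OF v] Uspace_scale[OF u] Uspace_scale[OF v]
         scale_right_distrib)
qed

lemma scale_Uspace:
  assumes u: "u \<in> Uspace scale"
  shows "uscale scale c u \<in> Uspace scale"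
proof -
  obtain M where "\<forall>xs. M < length xs \<longrightarrow> u xs = 0"
    using Uspace_vanishes[OF u] by blast
  then show ?thesis
    by (intro UspaceI[where M = M])
       (simp_all add: uscale_def Uspace_add[OF u] Uspace_scale[OF u] scale_right_distrib mult.commute)
qed

lemma sgnb_Uspace: "u \<in> Uspace scale \<Longrightarrow> sgnb b u \<in> Uspace scale"
  using scale_Uspace[of u "- 1"] by (cases b) (simp_all add: uscale_def fun_Compl_def)

lemma uminus_Uspace: "u \<in> Uspace scale \<Longrightarrow> - u \<in> Uspace scale"
  using sgnb_Uspace[of u True] by simp

lemma Cons_Uspace:
  assumes u: "u \<in> Uspace scale"
  shows "(\<lambda>zs. u (x # zs)) \<in> Uspace scale"
proof -
  obtain M where "\<forall>xs. M < length xs \<longrightarrow> u xs = 0"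
    using Uspace_vanishes[OF u] by blast
  then show ?thesis
    using Uspace_add[OF u, of "x # _"] Uspace_scale[OF u, of "x # _"]
    by (intro UspaceI[where M = M]) simp_all
qed

lemma opdot_Uspace:
  assumes u: "u \<in> Uspace scale"
  shows "opdot scale u x \<in> Uspace scale"
proof -
  obtain M where "\<forall>xs. M < length xs \<longrightarrow> u xs = 0"
    using Uspace_vanishes[OF u] by blast
  then show ?thesis
    using Uspace_add[OF u, of "x # _"] Uspace_scale[OF u, of "x # _"]
    by (intro UspaceI[where M = M]) (simp_all add: opdot_def scale_right_distrib mult.commute)
qed

lemma opdot_zero: "u \<in> Uspace scale \<Longrightarrow> opdot scale u 0 = 0"
  by (simp add: opdot_def Uspace_zero_Cons fun_eq_iff)

lemma opdot_add: "u \<in> Uspace scale \<Longrightarrow> opdot scale u (a + b) = opdot scale u a + opdot scale u b"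
  by (simp add: opdot_def Uspace_add_Cons scale_right_distrib fun_eq_iff)

lemma opdot_scale: "u \<in> Uspace scale \<Longrightarrow> opdot scale u (scale c a) = uscale scale c (opdot scale u a)"
  by (simp add: opdot_def uscale_def Uspace_scale_Cons mult.commute fun_eq_iff)

lemma vector_space_uscale: "vector_space (uscale scale)"
  by unfold_locales (simp_all add: uscale_def fun_eq_iff scale_right_distrib scale_left_distrib)

end

locale super_vector_space = vector_space scale
  for scale :: "'k::field \<Rightarrow> 'g::ab_group_add \<Rightarrow> 'g" +
  fixes G0 G1 :: "'g set"
  assumes subspace_G0: "subspace G0" and subspace_G1: "subspace G1"
    and G0_inter_G1: "G0 \<inter> G1 = {0}"
    and G0_plus_G1: "UNIV = {a + b | a b. a \<in> G0 \<and> b \<in> G1}"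
begin

abbreviation par :: "bool \<Rightarrow> 'g set" where "par \<equiv> gpart G0 G1"
abbreviation proj :: "bool \<Rightarrow> 'g \<Rightarrow> 'g" where "proj \<equiv> gproj G0 G1"
abbreviation oproj :: "bool \<Rightarrow> ('g list \<Rightarrow> 'g) \<Rightarrow> 'g list \<Rightarrow> 'g" where "oproj \<equiv> opproj G0 G1"
abbreviation Upar :: "bool \<Rightarrow> ('g list \<Rightarrow> 'g) set" where "Upar \<equiv> Upart scale G0 G1"

lemma subspace_gpart: "subspace (par b)"
  using subspace_G0 subspace_G1 by (simp add: gpart_def)

lemma gpart_zero [simp]: "0 \<in> par b"
  and gpart_add: "x \<in> par b \<Longrightarrow> y \<in> par b \<Longrightarrow> x + y \<in> par b"
  and gpart_diff: "x \<in> par b \<Longrightarrow> y \<in> par b \<Longrightarrow> x - y \<in> par b"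
  and gpart_scale: "x \<in> par b \<Longrightarrow> scale c x \<in> par b"
  using subspace_gpart[of b] by (simp_all add: subspace_0 subspace_add subspace_diff subspace_scale)

lemma gpart_sgnb: "x \<in> par b \<Longrightarrow> sgnb c x \<in> par b"
  using subspace_gpart[of b] by (simp add: sgnb_def subspace_neg)

lemma gpart_disjoint: "x \<in> par b \<Longrightarrow> x \<in> par (\<not> b) \<Longrightarrow> x = 0"
  using G0_inter_G1 by (cases b) (auto simp: gpart_def)

lemma gpart_decomp: "\<exists>y z. y \<in> par b \<and> z \<in> par (\<not> b) \<and> x = y + z"
proof -
  obtain y z where "y \<in> G0" "z \<in> G1" "x = y + z"
    using G0_plus_G1 by blast
  then show ?thesis
    by (cases b) (auto simp: gpart_def add.commute)
qed

lemma gproj_ex1: "\<exists>!y. y \<in> par b \<and> x - y \<in> par (\<not> b)"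
proof -
  obtain y z where yz: "y \<in> par b" "z \<in> par (\<not> b)" "x = y + z"
    using gpart_decomp by blast
  show ?thesis
  proof (rule ex1I[of _ y])
    show "y \<in> par b \<and> x - y \<in> par (\<not> b)"
      using yz by simp
    fix y' assume y': "y' \<in> par b \<and> x - y' \<in> par (\<not> b)"
    have in_b: "y' - y \<in> par b"
      using gpart_diff y' yz(1) by blast
    have "z - (x - y') \<in> par (\<not> b)"
      using gpart_diff y' yz(2) by blast
    moreover have "z - (x - y') = y' - y"
      using yz(3) by (simp add: algebra_simps)
    ultimately have "y' - y \<in> par (\<not> b)"
      by simp
    with in_b show "y' = y"
      using gpart_disjoint by fastforce
  qed
qed

lemma gproj_in_gpart [simp]: "proj b x \<in> par b"
  and gproj_complement: "x - proj b x \<in> par (\<not> b)"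
  using theI'[OF gproj_ex1[of b x]] by (simp_all add: gproj_def)

lemma gproj_eqI: "y \<in> par b \<Longrightarrow> x - y \<in> par (\<not> b) \<Longrightarrow> proj b x = y"
  using gproj_ex1[of b x] gproj_in_gpart gproj_complement by blast

lemma gproj_id: "x \<in> par b \<Longrightarrow> proj b x = x"
  by (rule gproj_eqI) simp_all

lemma gproj_vanishes: "x \<in> par b \<Longrightarrow> proj (\<not> b) x = 0"
  by (rule gproj_eqI) simp_all

lemma gproj_sum: "proj False x + proj True x = x"
proof -
  have "proj True x = x - proj False x"
    using gproj_complement[of x False] by (intro gproj_eqI) simp_all
  then show ?thesis
    by simp
qed

lemma gproj_add: "proj b (x + y) = proj b x + proj b y"
proof (rule gproj_eqI)
  have "(x - proj b x) + (y - proj b y) \<in> par (\<not> b)"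
    by (intro gpart_add gproj_complement)
  then show "x + y - (proj b x + proj b y) \<in> par (\<not> b)"
    by (simp add: algebra_simps)
qed (simp add: gpart_add)

lemma gproj_scale: "proj b (scale c x) = scale c (proj b x)"
proof (rule gproj_eqI)
  have "scale c (x - proj b x) \<in> par (\<not> b)"
    by (intro gpart_scale gproj_complement)
  then show "scale c x - scale c (proj b x) \<in> par (\<not> b)"
    by (simp add: scale_right_diff_distrib)
qed (simp add: gpart_scale)

lemma Uspace_Cons_split: "u \<in> Uspace scale \<Longrightarrow> u (x # ys) = u (proj False x # ys) + u (proj True x # ys)"
  using Uspace_add_Cons[of u "proj False x" "proj True x" ys] by (simp add: gproj_sum)

lemma Uspace_Cons_eqI:
  assumes "u \<in> Uspace scale" "v \<in> Uspace scale"
    and "\<And>e y. y \<in> par e \<Longrightarrow> u (y # ys) = v (y # ys)"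
  shows "u (x # ys) = v (x # ys)"
proof -
  have "u (x # ys) = u (proj False x # ys) + u (proj True x # ys)"
    by (rule Uspace_Cons_split[OF assms(1)])
  also have "\<dots> = v (proj False x # ys) + v (proj True x # ys)"
    using assms(3)[OF gproj_in_gpart] by simp
  also have "\<dots> = v (x # ys)"
    by (rule Uspace_Cons_split[OF assms(2), symmetric])
  finally show ?thesis .
qed

lemma oproj_add: "oproj b (\<lambda>zs. A zs + B zs) xs = oproj b A xs + oproj b B xs"
  by (induction xs arbitrary: b A B) (simp_all add: gproj_add algebra_simps)

lemma oproj_scale: "oproj b (\<lambda>zs. scale c (A zs)) xs = scale c (oproj b A xs)"
  by (induction xs arbitrary: b A) (simp_all add: gproj_scale scale_right_distrib)

lemma oproj_zero: "oproj b (\<lambda>_. 0) xs = 0"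
  by (induction xs arbitrary: b) (simp_all add: gproj_id)

lemma oproj_cong:
  "(\<And>zs. length zs = length xs \<Longrightarrow> A zs = B zs) \<Longrightarrow> oproj b A xs = oproj b B xs"
proof (induction xs arbitrary: b A B)
  case (Cons x xs)
  show ?case
    by (simp, intro arg_cong2[where f = "(+)"] Cons.IH) (simp_all add: Cons.prems)
qed simp

lemma Upart_Uspace: "u \<in> Upar b \<Longrightarrow> u \<in> Uspace scale"
  by (simp add: Upart_iff)

lemma Upart_gpart: "u \<in> Upar b \<Longrightarrow> list_all2 (\<lambda>x e. x \<in> par e) xs es \<Longrightarrow> u xs \<in> par (b \<noteq> parsum es)"
  by (simp add: Upart_iff)

lemma Upart_Nil: "u \<in> Upar b \<Longrightarrow> u [] \<in> par b"
  using Upart_gpart[of u b "[]" "[]"] by simp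

lemma Cons_Upart:
  assumes u: "u \<in> Upar b" and x: "x \<in> par e"
  shows "(\<lambda>zs. u (x # zs)) \<in> Upar (b \<noteq> e)"
proof -
  have "u (x # xs) \<in> par ((b \<noteq> e) \<noteq> parsum es)" if "list_all2 (\<lambda>x e. x \<in> par e) xs es" for xs es
    using Upart_gpart[OF u, of "x # xs" "e # es"] that x by (cases b; cases e) simp_all
  then show ?thesis
    using Cons_Uspace[OF Upart_Uspace[OF u]] by (simp add: Upart_iff)
qed

lemma opdot_Upart:
  assumes u: "u \<in> Upar b" and x: "x \<in> par e"
  shows "opdot scale u x \<in> Upar (b \<noteq> e)"
  using Cons_Upart[OF u x] opdot_Uspace[OF Upart_Uspace[OF u]]
  by (simp add: Upart_iff opdot_def gpart_scale)

lemma zero_Upart [simp]: "0 \<in> Upar b"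
  by (simp add: Upart_iff)

lemma add_Upart: "u \<in> Upar b \<Longrightarrow> v \<in> Upar b \<Longrightarrow> u + v \<in> Upar b"
  by (simp add: Upart_iff add_Uspace gpart_add)

lemma scale_Upart: "u \<in> Upar b \<Longrightarrow> uscale scale c u \<in> Upar b"
  using scale_Uspace[OF Upart_Uspace] by (simp add: Upart_iff gpart_scale)

lemma oproj_Upart_same: "A \<in> Upar b \<Longrightarrow> oproj b A = A"
  and oproj_Upart_other: "A \<in> Upar b \<Longrightarrow> oproj (\<not> b) A = 0"
proof -
  have "oproj b A xs = A xs \<and> oproj (\<not> b) A xs = 0" if "A \<in> Upar b" for A b xs
    using that
  proof (induction xs arbitrary: b A)
    case Nil
    then show ?case
      using Upart_Nil by (simp add: gproj_id gproj_vanishes)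
  next
    case (Cons x xs)
    have "(\<lambda>zs. A (proj False x # zs)) \<in> Upar b"
      using Cons_Upart[OF Cons.prems gproj_in_gpart[of False x]] by simp
    moreover have "(\<lambda>zs. A (proj True x # zs)) \<in> Upar (\<not> b)"
      using Cons_Upart[OF Cons.prems gproj_in_gpart[of True x]] by simp
    ultimately show ?case
      using Cons.IH Uspace_Cons_split[OF Upart_Uspace[OF Cons.prems], of x xs] by fastforce
  qed
  then show "A \<in> Upar b \<Longrightarrow> oproj b A = A" "A \<in> Upar b \<Longrightarrow> oproj (\<not> b) A = 0"
    by (simp_all add: fun_eq_iff)
qed

lemma oproj_sum: "A \<in> Uspace scale \<Longrightarrow> oproj False A xs + oproj True A xs = A xs"
proof (induction xs arbitrary: A)
  case (Cons x xs)
  have "oproj False A (x # xs) + oproj True A (x # xs)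
     = (oproj False (\<lambda>zs. A (proj False x # zs)) xs + oproj True (\<lambda>zs. A (proj False x # zs)) xs)
     + (oproj False (\<lambda>zs. A (proj True x # zs)) xs + oproj True (\<lambda>zs. A (proj True x # zs)) xs)"
    by (simp add: algebra_simps)
  also have "\<dots> = A (x # xs)"
    using Cons.IH[OF Cons_Uspace[OF Cons.prems]] Uspace_Cons_split[OF Cons.prems, of x xs] by simp
  finally show ?case .
qed (simp add: gproj_sum)

lemma oproj_Uspace:
  assumes A: "A \<in> Uspace scale"
  shows "oproj b A \<in> Uspace scale"
proof -
  have multilinear: "oproj b A (xs @ (a + c) # ys) = oproj b A (xs @ a # ys) + oproj b A (xs @ c # ys)"
      "oproj b A (xs @ scale k a # ys) = scale k (oproj b A (xs @ a # ys))"
    if "A \<in> Uspace scale" for xs ys a c k b A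
    using that
    by (induction xs arbitrary: b A)
       (simp_all add: gproj_add gproj_scale Uspace_add_Cons Uspace_scale_Cons oproj_add oproj_scale
         Cons_Uspace scale_right_distrib algebra_simps)
  obtain M where M: "\<forall>xs. M < length xs \<longrightarrow> A xs = 0"
    using Uspace_vanishes[OF A] by blast
  have "oproj b A xs = 0" if "M < length xs" for xs
    using oproj_cong[of xs A "\<lambda>_. 0" b] oproj_zero M that by simp
  then show ?thesis
    using multilinear A by (intro UspaceI[where M = M]) simp_all
qed

lemma oproj_Upart:
  assumes A: "A \<in> Uspace scale"
  shows "oproj b A \<in> Upar b"
proof -
  have "oproj b A xs \<in> par (b \<noteq> parsum es)"
    if "list_all2 (\<lambda>x e. x \<in> par e) xs es" "A \<in> Uspace scale" for xs es b A
    using that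
  proof (induction xs arbitrary: es b A)
    case (Cons x xs)
    then obtain e es' where e: "es = e # es'" "x \<in> par e" "list_all2 (\<lambda>x e. x \<in> par e) xs es'"
      by (auto simp: list_all2_Cons1)
    then have "proj e x = x" "proj (\<not> e) x = 0"
      by (simp_all add: gproj_id gproj_vanishes)
    moreover have "oproj b (\<lambda>zs. A (0 # zs)) xs = 0" for b
      using Cons.prems(2) by (simp add: Uspace_zero_Cons oproj_zero)
    ultimately show ?case
      using Cons.IH[OF e(3) Cons_Uspace[OF Cons.prems(2)], where b = b]
        Cons.IH[OF e(3) Cons_Uspace[OF Cons.prems(2)], where b = "\<not> b"] e
      by (cases e) auto
  qed simp
  then show ?thesis
    using A oproj_Uspace[OF A] by (simp add: Upart_iff)
qed

lemma Upart_subspace: "module.subspace (uscale scale) (Upar b)"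
proof -
  interpret U: vector_space "uscale scale"
    by (rule vector_space_uscale)
  show ?thesis
    by (rule U.subspaceI) (simp_all add: add_Upart scale_Upart)
qed

lemma Upart_inter: "Upar False \<inter> Upar True = {0}"
proof -
  have "u = 0" if "u \<in> Upar False" "u \<in> Upar True" for u
    using oproj_Upart_same[OF that(1)] oproj_Upart_other[OF that(2)] by simp
  then show ?thesis
    by auto
qed

lemma Uspace_eq_Upart_sum: "Uspace scale = {a + b | a b. a \<in> Upar False \<and> b \<in> Upar True}"
proof -
  have "u = oproj False u + oproj True u" if "u \<in> Uspace scale" for u
    using oproj_sum[OF that] by (simp add: fun_eq_iff)
  then show ?thesis
    using oproj_Upart add_Uspace Upart_Uspace by blast
qed

end

locale lie_superalgebra_UNIV = super_vector_space scale G0 G1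
  for scale :: "'k::field_char_0 \<Rightarrow> 'g::ab_group_add \<Rightarrow> 'g" and G0 G1 +
  fixes br :: "'g \<Rightarrow> 'g \<Rightarrow> 'g"
  assumes br_add_left: "br (a + b) c = br a c + br b c"
    and br_add_right: "br c (a + b) = br c a + br c b"
    and br_scale_left: "br (scale t a) b = scale t (br a b)"
    and br_scale_right: "br a (scale t b) = scale t (br a b)"
    and br_gpart: "a \<in> gpart G0 G1 i \<Longrightarrow> b \<in> gpart G0 G1 j \<Longrightarrow> br a b \<in> gpart G0 G1 (i \<noteq> j)"
    and br_antisym: "a \<in> gpart G0 G1 i \<Longrightarrow> b \<in> gpart G0 G1 j \<Longrightarrow> br a b = - sgnb (i \<and> j) (br b a)"
    and br_jacobi: "a \<in> gpart G0 G1 i \<Longrightarrow> b \<in> gpart G0 G1 j \<Longrightarrow> c \<in> gpart G0 G1 k \<Longrightarrow>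
      br a (br b c) = br (br a b) c + sgnb (i \<and> j) (br b (br a c))"

lemma lie_superalgebra_UNIV_if_lie_superalgebra:
  assumes "lie_superalgebra scale UNIV G0 G1 br"
  shows "lie_superalgebra_UNIV scale G0 G1 br"
proof -
  \<comment> \<open>The conjuncts are extracted by assumption: the simplifier would orient the conjunct
    UNIV = G0 + G1 as a rewrite rule for UNIV and loop.\<close>
  note ax = assms[unfolded lie_superalgebra_def ball_UNIV]
  have vs: "vector_space scale"
    and sub: "module.subspace scale G0" "module.subspace scale G1"
    and inter: "G0 \<inter> G1 = {0}"
    and sum: "UNIV = {a + b | a b. a \<in> G0 \<and> b \<in> G1}"
    using ax by - (elim conjE, assumption)+
  have add: "\<forall>a b c. br (a + b) c = br a c + br b c \<and> br c (a + b) = br c a + br c b"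
    and scl: "\<forall>k a b. br (scale k a) b = scale k (br a b) \<and> br a (scale k b) = scale k (br a b)"
    and grad: "\<forall>i j a b. a \<in> gpart G0 G1 i \<longrightarrow> b \<in> gpart G0 G1 j \<longrightarrow> br a b \<in> gpart G0 G1 (i \<noteq> j)"
    and anti: "\<forall>i j a b. a \<in> gpart G0 G1 i \<longrightarrow> b \<in> gpart G0 G1 j \<longrightarrow> br a b = - sgnb (i \<and> j) (br b a)"
    and jac: "\<forall>i j k a b c. a \<in> gpart G0 G1 i \<longrightarrow> b \<in> gpart G0 G1 j \<longrightarrow> c \<in> gpart G0 G1 k \<longrightarrow>
         br a (br b c) = br (br a b) c + sgnb (i \<and> j) (br b (br a c))"
    using ax by - (elim conjE, assumption)+
  show ?thesis
    by (intro lie_superalgebra_UNIV.intro super_vector_space.intro super_vector_space_axioms.intro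
        lie_superalgebra_UNIV_axioms.intro vs sub inter sum)
       (use add scl grad anti jac in blast)+
qed

context lie_superalgebra_UNIV
begin

abbreviation bro :: "nat \<Rightarrow> nat \<Rightarrow> ('g list \<Rightarrow> 'g) \<Rightarrow> ('g list \<Rightarrow> 'g) \<Rightarrow> 'g list \<Rightarrow> 'g"
  where "bro \<equiv> brop scale G0 G1 br"
abbreviation ubr :: "('g list \<Rightarrow> 'g) \<Rightarrow> ('g list \<Rightarrow> 'g) \<Rightarrow> 'g list \<Rightarrow> 'g"
  where "ubr \<equiv> ubracket scale G0 G1 br"

lemma brop_add_left: "bro p q (\<lambda>zs. A zs + A' zs) B ys = bro p q A B ys + bro p q A' B ys"
  by (induction ys arbitrary: p q A A' B)
     (simp_all add: br_add_left sum_UNIV_bool scale_right_distrib sgnb_add algebra_simps)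

lemma brop_scale_left: "bro p q (\<lambda>zs. scale c (A zs)) B ys = scale c (bro p q A B ys)"
  by (induction ys arbitrary: p q A B)
     (simp_all add: br_scale_left sum_UNIV_bool scale_right_distrib scale_right_diff_distrib mult.commute)

lemma brop_add_right: "bro p q A (\<lambda>zs. B zs + B' zs) ys = bro p q A B ys + bro p q A B' ys"
proof -
  have "oproj j (\<lambda>zs. B zs + B' zs) = (\<lambda>zs. oproj j B zs + oproj j B' zs)" for j B B'
    by (simp add: oproj_add fun_eq_iff)
  then show ?thesis
    by (induction ys arbitrary: p q A B B')
       (simp_all add: br_add_right sum_UNIV_bool scale_right_distrib sgnb_add algebra_simps)
qed

lemma brop_scale_right: "bro p q A (\<lambda>zs. scale c (B zs)) ys = scale c (bro p q A B ys)"
proof -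
  have "oproj j (\<lambda>zs. scale c (B zs)) = (\<lambda>zs. scale c (oproj j B zs))" for j B
    by (simp add: oproj_scale fun_eq_iff)
  then show ?thesis
    by (induction ys arbitrary: p q A B)
       (simp_all add: br_scale_right sum_UNIV_bool scale_right_distrib scale_right_diff_distrib mult.commute)
qed

lemma brop_cong:
  assumes "length ys = p + q"
    and "\<And>zs. length zs = p \<Longrightarrow> A zs = A' zs" and "\<And>zs. length zs = q \<Longrightarrow> B zs = B' zs"
  shows "bro p q A B ys = bro p q A' B' ys"
  using assms
proof (induction ys arbitrary: p q A A' B B')
  case (Cons x ys)
  have "bro p (q - 1) A (\<lambda>zs. B (x # zs)) ys = bro p (q - 1) A' (\<lambda>zs. B' (x # zs)) ys"
    if "q \<noteq> 0"
    using that Cons.prems by (intro Cons.IH) auto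
  moreover have "bro (p - 1) q (\<lambda>zs. A (proj i x # zs)) (oproj j B) ys
      = bro (p - 1) q (\<lambda>zs. A' (proj i x # zs)) (oproj j B') ys" if "p \<noteq> 0" for i j
    using that Cons.prems by (intro Cons.IH oproj_cong) auto
  ultimately show ?case
    by (cases p) simp_all
qed simp

lemma brop_vanishes_left:
  assumes "length ys = p + q" "\<And>zs. length zs = p \<Longrightarrow> A zs = 0"
  shows "bro p q A B ys = 0"
  using brop_cong[OF assms(1), of A "\<lambda>zs. scale 0 (A zs)" B B] assms(2)
    brop_scale_left[where c = 0 and A = A]
  by simp

lemma brop_vanishes_right:
  assumes "length ys = p + q" "\<And>zs. length zs = q \<Longrightarrow> B zs = 0"
  shows "bro p q A B ys = 0"
  using brop_cong[OF assms(1), of A A B "\<lambda>zs. scale 0 (B zs)"] assms(2)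
    brop_scale_right[where c = 0 and B = B]
  by simp

lemma ubracket_Nil: "ubr u v [] = br (u []) (v [])"
  by (simp add: ubracket_def)

lemma ubracket_add_left: "ubr (u + u') v = ubr u v + ubr u' v"
  and ubracket_add_right: "ubr u (v + v') = ubr u v + ubr u v'"
  and ubracket_scale_left: "ubr (uscale scale c u) v = uscale scale c (ubr u v)"
  and ubracket_scale_right: "ubr u (uscale scale c v) = uscale scale c (ubr u v)"
  by (simp_all add: ubracket_def fun_eq_iff plus_fun_def uscale_def sum.distrib scale_sum_right
      brop_add_left brop_add_right brop_scale_left brop_scale_right)

lemma ubracket_sgnb_left: "ubr (sgnb b u) v = sgnb b (ubr u v)"
  and ubracket_sgnb_right: "ubr u (sgnb b v) = sgnb b (ubr u v)"
  using ubracket_scale_left[of "- 1" u v] ubracket_scale_right[of u "- 1" v]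
  by (cases b; simp add: fun_eq_iff uscale_def fun_Compl_def)+

lemma ubracket_zero_left [simp]: "ubr 0 v = 0"
  and ubracket_zero_right [simp]: "ubr u 0 = 0"
  using ubracket_scale_left[of 0 0 v] ubracket_scale_right[of u 0 0]
  by (simp_all add: uscale_def zero_fun_def)

lemma brop_opdot_left:
  assumes "length ys = p + q"
  shows "bro p q (opdot scale u x) B ys = scale (of_nat (Suc p)) (bro p q (\<lambda>zs. u (x # zs)) B ys)"
  using brop_cong[OF assms, of "opdot scale u x" "\<lambda>zs. scale (of_nat (Suc p)) (u (x # zs))" B B]
  by (simp add: opdot_def brop_scale_left)

lemma brop_opdot_right:
  assumes "length ys = p + q"
  shows "bro p q A (opdot scale v x) ys = scale (of_nat (Suc q)) (bro p q A (\<lambda>zs. v (x # zs)) ys)"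
  using brop_cong[OF assms, of A A "opdot scale v x" "\<lambda>zs. scale (of_nat (Suc q)) (v (x # zs))"]
  by (simp add: opdot_def brop_scale_right)

lemma ubracket_Cons:
  "ubr u v (x # ys) = scale (1 / of_nat (Suc (length ys)))
     (ubr u (opdot scale v x) ys +
      (\<Sum>i\<in>UNIV. \<Sum>j\<in>UNIV. sgnb (i \<and> j) (ubr (opdot scale u (proj i x)) (oproj j v) ys)))"
proof -
  define n where "n = length ys"
  define F where "F p = (if Suc n - p = 0 then 0
    else scale (of_nat (Suc n - p)) (bro p (Suc n - p - 1) u (\<lambda>zs. v (x # zs)) ys))" for p
  define G where "G p = (if p = 0 then 0 else scale (of_nat p)
    (\<Sum>i\<in>UNIV. \<Sum>j\<in>UNIV. sgnb (i \<and> j) (bro (p - 1) (Suc n - p) (\<lambda>zs. u (proj i x # zs)) (oproj j v) ys)))"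
    for p
  have "ubr u v (x # ys) = (\<Sum>p\<in>{0..Suc n}. scale (1 / of_nat (Suc n)) (F p + G p))"
    unfolding ubracket_def n_def F_def G_def by (intro sum.cong) auto
  also have "\<dots> = scale (1 / of_nat (Suc n)) (sum F {0..Suc n} + sum G {0..Suc n})"
    by (simp only: scale_right_distrib scale_sum_right sum.distrib)
  also have "sum F {0..Suc n} = ubr u (opdot scale v x) ys"
  proof -
    have "sum F {0..Suc n} = sum F {0..n}"
      by (simp add: sum.atLeast0_atMost_Suc F_def)
    also have "\<dots> = (\<Sum>p\<in>{0..n}. bro p (n - p) u (opdot scale v x) ys)"
      by (rule sum.cong) (simp_all add: F_def n_def brop_opdot_right Suc_diff_le)
    finally show ?thesis
      by (simp add: ubracket_def n_def)
  qed
  also have "sum G {0..Suc n} =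
      (\<Sum>i\<in>UNIV. \<Sum>j\<in>UNIV. sgnb (i \<and> j) (ubr (opdot scale u (proj i x)) (oproj j v) ys))"
  proof -
    have "sum G {0..Suc n} = (\<Sum>p\<in>{0..n}. G (Suc p))"
      by (simp only: sum.atLeast0_atMost_Suc_shift) (simp add: G_def)
    also have "\<dots> = (\<Sum>p\<in>{0..n}. \<Sum>i\<in>UNIV. \<Sum>j\<in>UNIV.
        sgnb (i \<and> j) (bro p (n - p) (opdot scale u (proj i x)) (oproj j v) ys))"
      by (rule sum.cong)
         (simp_all add: G_def n_def brop_opdot_left sum_UNIV_bool scale_right_distrib
          scale_right_diff_distrib)
    finally show ?thesis
      by (simp add: ubracket_def n_def sum_UNIV_bool sum.distrib sum_subtractf)
  qed
  finally show ?thesis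
    by (simp add: n_def)
qed

lemma ubracket_Cons_homogeneous:
  assumes u: "u \<in> Uspace scale" and v: "v \<in> Upar j" and x: "x \<in> par e"
  shows "ubr u v (x # ys) = scale (1 / of_nat (Suc (length ys)))
     (ubr u (opdot scale v x) ys + sgnb (e \<and> j) (ubr (opdot scale u x) v ys))"
proof -
  have "oproj j v = v" "oproj (\<not> j) v = 0"
    using oproj_Upart_same[OF v] oproj_Upart_other[OF v] by simp_all
  moreover have "proj e x = x" "opdot scale u (proj (\<not> e) x) = 0"
    using x u by (simp_all add: gproj_id gproj_vanishes opdot_zero)
  ultimately show ?thesis
    by (cases e; cases j) (simp_all add: ubracket_Cons sum_UNIV_bool)
qed

lemma opdot_ubracket:
  assumes "u \<in> Uspace scale" and "v \<in> Upar j" and "x \<in> par e"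
  shows "opdot scale (ubr u v) x = ubr u (opdot scale v x) + sgnb (e \<and> j) (ubr (opdot scale u x) v)"
proof
  fix zs :: "'g list"
  have "(of_nat (Suc (length zs)) :: 'k) \<noteq> 0"
    by (rule of_nat_neq_0)
  then show "opdot scale (ubr u v) x zs =
      (ubr u (opdot scale v x) + sgnb (e \<and> j) (ubr (opdot scale u x) v)) zs"
    unfolding opdot_def[of scale "ubr u v"] ubracket_Cons_homogeneous[OF assms] by simp
qed

lemma ubracket_vanishes:
  assumes "\<forall>xs. M < length xs \<longrightarrow> u xs = 0" and "\<forall>xs. N < length xs \<longrightarrow> v xs = 0"
    and "M + N < length xs"
  shows "ubr u v xs = 0"
  unfolding ubracket_def
proof (intro sum.neutral ballI)
  fix p assume "p \<in> {0..length xs}"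
  then show "bro p (length xs - p) u v xs = 0"
    using assms by (cases "M < p") (auto intro: brop_vanishes_left brop_vanishes_right)
qed

lemma ubracket_Uspace:
  assumes u: "u \<in> Uspace scale" and v: "v \<in> Uspace scale"
  shows "ubr u v \<in> Uspace scale"
proof -
  have multilinear: "ubr u v (xs @ (a + c) # ys) = ubr u v (xs @ a # ys) + ubr u v (xs @ c # ys)"
      "ubr u v (xs @ scale k a # ys) = scale k (ubr u v (xs @ a # ys))"
    if "u \<in> Uspace scale" "v \<in> Uspace scale" for xs ys a c k u v
    using that
    by (induction xs arbitrary: u v)
       (simp_all add: ubracket_Cons gproj_add gproj_scale opdot_add opdot_scale opdot_Uspace oproj_Uspace
         ubracket_add_left ubracket_add_right ubracket_scale_left ubracket_scale_right sum_UNIV_bool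
         scale_right_distrib scale_right_diff_distrib mult.commute algebra_simps)
  obtain M N where "\<forall>xs. M < length xs \<longrightarrow> u xs = 0" "\<forall>xs. N < length xs \<longrightarrow> v xs = 0"
    using Uspace_vanishes[OF u] Uspace_vanishes[OF v] by blast
  then show ?thesis
    using multilinear[OF u v] by (intro UspaceI[where M = "M + N"]) (simp_all add: ubracket_vanishes)
qed

lemma ubracket_Upart:
  assumes "u \<in> Upar i" and "v \<in> Upar j"
  shows "ubr u v \<in> Upar (i \<noteq> j)"
proof -
  have "ubr u v xs \<in> par ((i \<noteq> j) \<noteq> parsum es)"
    if "list_all2 (\<lambda>x e. x \<in> par e) xs es" "u \<in> Upar i" "v \<in> Upar j" for xs es u v i j
    using that
  proof (induction xs arbitrary: es u v i j)
    case Nil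
    then show ?case
      using br_gpart[OF Upart_Nil[OF Nil.prems(2)] Upart_Nil[OF Nil.prems(3)]] by (simp add: ubracket_Nil)
  next
    case (Cons x xs)
    then obtain e es' where e: "es = e # es'" "x \<in> par e" "list_all2 (\<lambda>x e. x \<in> par e) xs es'"
      by (auto simp: list_all2_Cons1)
    have parity: "((i \<noteq> (j \<noteq> e)) \<noteq> parsum es') = ((i \<noteq> j) \<noteq> parsum es)"
        "(((i \<noteq> e) \<noteq> j) \<noteq> parsum es') = ((i \<noteq> j) \<noteq> parsum es)"
      using e(1) by auto
    have "ubr u (opdot scale v x) xs \<in> par ((i \<noteq> j) \<noteq> parsum es)"
      using Cons.IH[OF e(3) Cons.prems(2) opdot_Upart[OF Cons.prems(3) e(2)]] by (simp only: parity)
    moreover have "ubr (opdot scale u x) v xs \<in> par ((i \<noteq> j) \<noteq> parsum es)"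
      using Cons.IH[OF e(3) opdot_Upart[OF Cons.prems(2) e(2)] Cons.prems(3)] by (simp only: parity)
    ultimately show ?case
      unfolding ubracket_Cons_homogeneous[OF Upart_Uspace[OF Cons.prems(2)] Cons.prems(3) e(2)]
      by (intro gpart_scale gpart_add gpart_sgnb)
  qed
  then show ?thesis
    using ubracket_Uspace[OF Upart_Uspace Upart_Uspace] assms by (simp add: Upart_iff)
qed

lemma ubracket_antisym:
  assumes "u \<in> Upar i" and "v \<in> Upar j"
  shows "ubr u v = - sgnb (i \<and> j) (ubr v u)"
proof
  fix xs
  show "ubr u v xs = (- sgnb (i \<and> j) (ubr v u)) xs"
    using assms
  proof (induction xs arbitrary: u v i j)
    case Nil
    show ?case
      using br_antisym[OF Upart_Nil[OF Nil.prems(1)] Upart_Nil[OF Nil.prems(2)]] by (simp add: ubracket_Nil)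
  next
    case (Cons x xs)
    note u = Cons.prems(1) and v = Cons.prems(2)
    show ?case
    proof (rule Uspace_Cons_eqI)
      show "ubr u v \<in> Uspace scale" "- sgnb (i \<and> j) (ubr v u) \<in> Uspace scale"
        using u v by (simp_all add: ubracket_Uspace Upart_Uspace uminus_Uspace sgnb_Uspace)
      fix e y assume y: "y \<in> par e"
      have IH: "ubr u (opdot scale v y) xs = - sgnb (i \<and> (j \<noteq> e)) (ubr (opdot scale v y) u xs)"
          "ubr (opdot scale u y) v xs = - sgnb ((i \<noteq> e) \<and> j) (ubr v (opdot scale u y) xs)"
        using Cons.IH[OF u opdot_Upart[OF v y]] Cons.IH[OF opdot_Upart[OF u y] v] by simp_all
      have "ubr u v (y # xs) = - sgnb (i \<and> j) (ubr v u (y # xs))"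
        unfolding ubracket_Cons_homogeneous[OF Upart_Uspace[OF u] v y]
          ubracket_Cons_homogeneous[OF Upart_Uspace[OF v] u y] IH
        by (cases i; cases j; cases e) (simp_all add: scale_minus_right scale_right_distrib algebra_simps)
      then show "ubr u v (y # xs) = (- sgnb (i \<and> j) (ubr v u)) (y # xs)"
        by simp
    qed
  qed
qed

lemma ubracket_Cons_nested_right:
  assumes u: "u \<in> Uspace scale" and v: "v \<in> Upar j" and w: "w \<in> Upar k" and y: "y \<in> par e"
  shows "ubr u (ubr v w) (y # xs) = scale (1 / of_nat (Suc (length xs)))
    (ubr u (ubr v (opdot scale w y)) xs + sgnb (e \<and> k) (ubr u (ubr (opdot scale v y) w) xs)
     + sgnb (e \<and> (j \<noteq> k)) (ubr (opdot scale u y) (ubr v w) xs))"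
  using ubracket_Cons_homogeneous[OF u ubracket_Upart[OF v w] y] opdot_ubracket[OF Upart_Uspace[OF v] w y]
  by (simp add: ubracket_add_right ubracket_sgnb_right)

lemma ubracket_Cons_nested_left:
  assumes u: "u \<in> Uspace scale" and v: "v \<in> Upar j" and w: "w \<in> Upar k" and y: "y \<in> par e"
  shows "ubr (ubr u v) w (y # xs) = scale (1 / of_nat (Suc (length xs)))
    (ubr (ubr u v) (opdot scale w y) xs + sgnb (e \<and> k) (ubr (ubr u (opdot scale v y)) w xs)
     + sgnb (e \<and> k) (sgnb (e \<and> j) (ubr (ubr (opdot scale u y) v) w xs)))"
  using ubracket_Cons_homogeneous[OF ubracket_Uspace[OF u Upart_Uspace[OF v]] w y] opdot_ubracket[OF u v y]
  by (simp add: ubracket_add_left ubracket_sgnb_left sgnb_add add.assoc)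

lemma ubracket_jacobi:
  assumes "u \<in> Upar i" and "v \<in> Upar j" and "w \<in> Upar k"
  shows "ubr u (ubr v w) = ubr (ubr u v) w + sgnb (i \<and> j) (ubr v (ubr u w))"
proof
  fix xs
  show "ubr u (ubr v w) xs = (ubr (ubr u v) w + sgnb (i \<and> j) (ubr v (ubr u w))) xs"
    using assms
  proof (induction xs arbitrary: u v w i j k)
    case Nil
    show ?case
      using br_jacobi[OF Upart_Nil[OF Nil.prems(1)] Upart_Nil[OF Nil.prems(2)] Upart_Nil[OF Nil.prems(3)]]
      by (simp add: ubracket_Nil)
  next
    case (Cons x xs)
    note u = Cons.prems(1) and v = Cons.prems(2) and w = Cons.prems(3)
    have Uu: "u \<in> Uspace scale" and Uv: "v \<in> Uspace scale" and Uw: "w \<in> Uspace scale"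
      using u v w by (simp_all add: Upart_Uspace)
    show ?case
    proof (rule Uspace_Cons_eqI)
      show "ubr u (ubr v w) \<in> Uspace scale"
        and "ubr (ubr u v) w + sgnb (i \<and> j) (ubr v (ubr u w)) \<in> Uspace scale"
        using Uu Uv Uw by (simp_all add: ubracket_Uspace add_Uspace sgnb_Uspace)
      fix e y assume y: "y \<in> par e"
      have IH: "ubr u (ubr v (opdot scale w y)) xs =
          ubr (ubr u v) (opdot scale w y) xs + sgnb (i \<and> j) (ubr v (ubr u (opdot scale w y)) xs)"
        "ubr u (ubr (opdot scale v y) w) xs =
          ubr (ubr u (opdot scale v y)) w xs + sgnb (i \<and> (j \<noteq> e)) (ubr (opdot scale v y) (ubr u w) xs)"
        "ubr (opdot scale u y) (ubr v w) xs =
          ubr (ubr (opdot scale u y) v) w xs + sgnb ((i \<noteq> e) \<and> j) (ubr v (ubr (opdot scale u y) w) xs)"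
        using Cons.IH[OF u v opdot_Upart[OF w y]] Cons.IH[OF u opdot_Upart[OF v y] w]
          Cons.IH[OF opdot_Upart[OF u y] v w]
        by simp_all
      have "ubr u (ubr v w) (y # xs) =
          ubr (ubr u v) w (y # xs) + sgnb (i \<and> j) (ubr v (ubr u w) (y # xs))"
        unfolding ubracket_Cons_nested_right[OF Uu v w y] ubracket_Cons_nested_left[OF Uu v w y]
          ubracket_Cons_nested_right[OF Uv u w y] IH
        by (cases i; cases j; cases k; cases e)
           (simp_all add: scale_minus_right scale_right_distrib scale_right_diff_distrib algebra_simps)
      then show "ubr u (ubr v w) (y # xs) =
          (ubr (ubr u v) w + sgnb (i \<and> j) (ubr v (ubr u w))) (y # xs)"
        by simp
    qed
  qed
qed

lemma gpart_Upart: "gpart (Upar False) (Upar True) i = Upar i"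
  by (simp add: gpart_def)

lemma lie_superalgebra_Uspace:
  "lie_superalgebra (uscale scale) (Uspace scale) (Upar False) (Upar True) ubr"
  unfolding lie_superalgebra_def gpart_Upart
proof (intro conjI allI ballI impI)
  show "vector_space (uscale scale)"
    by (rule vector_space_uscale)
  show "module.subspace (uscale scale) (Upar False)" "module.subspace (uscale scale) (Upar True)"
    by (rule Upart_subspace)+
  show "Upar False \<inter> Upar True = {0}"
    by (rule Upart_inter)
  show "Uspace scale = {a + b | a b. a \<in> Upar False \<and> b \<in> Upar True}"
    by (rule Uspace_eq_Upart_sum)
  fix a b c :: "'g list \<Rightarrow> 'g" and t i j k
  show "ubr (a + b) c = ubr a c + ubr b c" "ubr c (a + b) = ubr c a + ubr c b"
    by (rule ubracket_add_left ubracket_add_right)+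
  show "ubr (uscale scale t a) b = uscale scale t (ubr a b)"
    "ubr a (uscale scale t b) = uscale scale t (ubr a b)"
    by (rule ubracket_scale_left ubracket_scale_right)+
  show "a \<in> Uspace scale \<Longrightarrow> b \<in> Uspace scale \<Longrightarrow> ubr a b \<in> Uspace scale"
    by (rule ubracket_Uspace)
  show "a \<in> Upar i \<Longrightarrow> b \<in> Upar j \<Longrightarrow> ubr a b \<in> Upar (i \<noteq> j)"
    by (rule ubracket_Upart)
  show "a \<in> Upar i \<Longrightarrow> b \<in> Upar j \<Longrightarrow> ubr a b = - sgnb (i \<and> j) (ubr b a)"
    by (rule ubracket_antisym)
  show "a \<in> Upar i \<Longrightarrow> b \<in> Upar j \<Longrightarrow> c \<in> Upar k \<Longrightarrow>
      ubr a (ubr b c) = ubr (ubr a b) c + sgnb (i \<and> j) (ubr b (ubr a c))"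
    by (rule ubracket_jacobi)
qed

end

theorem proposition4p1:
  fixes scale :: "'k::field_char_0 \<Rightarrow> 'g::ab_group_add \<Rightarrow> 'g"
    and G0 G1 :: "'g set" and br :: "'g \<Rightarrow> 'g \<Rightarrow> 'g"
  assumes "lie_superalgebra scale UNIV G0 G1 br"
  shows "lie_superalgebra (uscale scale) (Uspace scale)
           (Upart scale G0 G1 False) (Upart scale G0 G1 True) (ubracket scale G0 G1 br)"
proof -
  interpret lie_superalgebra_UNIV scale G0 G1 br
    using assms by (rule lie_superalgebra_UNIV_if_lie_superalgebra)
  show ?thesis
    by (rule lie_superalgebra_Uspace)
qed

end
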